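(* Let $p>0$, $m>0$, and let $N$ be a random variable on $\mathbb{N}_0$ with the arcsine probability mass function \[ f(n)=\mathbb{P}(N=n)=\nu(n)\,e^{n\theta(m)-\kappa(m)},\qquad \theta(m)=-\tfrac12\log\Big(1+\frac{p^2}{m^2}\Big),\quad \kappa(m)=p\arctan(m/p), \] where \[ \nu(2n)=\frac{1}{(2n)!}\prod_{i=0}^{n-1}\big((2i)^2+p^2\big),\qquad \nu(2n+1)=\frac{p}{(2n+1)!}\prod_{i=0}^{n-1}\big((2i+1)^2+p^2\big),\quad n\in\mathbb{N}_0 \] (empty products equal $1$). Let $b(n)=\frac{1}{\sqrt{n+1}}\big(\sqrt{1+\tfrac1n}-1\big)$ for $n\ge 1$, and define the probability mass function $b_2$ on $\{2,3,\dots\}$ by $b_2(2n)=b_2(2n+1)=\tfrac12 b(n)$ for $n\ge1$. Then there is a constant $C$ (not depending on $n$) such that \[ f(n\mid n\ge 2):=\mathbb{P}(N=n\mid N\ge 2)\le C\,b_2(n)\qquad\text{for all } n=2,3,\ldots. \]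
   Context: $b$ is the probability mass function of $\lfloor U^{-2}\rfloor$ for $U$ uniform on $(0,1)$, and $b_2$ is the law of $2Y$ or $2Y+1$ (each with probability $1/2$) with $Y\sim b$. The constant $C$ may depend on $p$ and $m$. *)

theory Defs
  imports "HOL-Analysis.Analysis"
begin

definition arcsine_nu :: "real \<Rightarrow> nat \<Rightarrow> real" where
  "arcsine_nu p n =
     (if even n then (\<Prod>i<n div 2. (2 * real i)^2 + p^2) / fact n
      else p * (\<Prod>i<n div 2. (2 * real i + 1)^2 + p^2) / fact n)"

definition arcsine_theta :: "real \<Rightarrow> real \<Rightarrow> real" where
  "arcsine_theta p m = - (1/2) * ln (1 + p^2 / m^2)"

definition arcsine_kappa :: "real \<Rightarrow> real \<Rightarrow> real" where
  "arcsine_kappa p m = p * arctan (m / p)"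

definition arcsine_pmf :: "real \<Rightarrow> real \<Rightarrow> nat \<Rightarrow> real" where
  "arcsine_pmf p m n =
     arcsine_nu p n * exp (real n * arcsine_theta p m - arcsine_kappa p m)"

definition arcsine_cond_pmf :: "real \<Rightarrow> real \<Rightarrow> nat \<Rightarrow> real" where
  "arcsine_cond_pmf p m n =
     arcsine_pmf p m n / (\<Sum>\<^sub>\<infinity>k\<in>{2..}. arcsine_pmf p m k)"

text \<open>b(n) = (sqrt(1 + 1/n) - 1)/sqrt(n+1) for n >= 1 (law of floor(U^-2)).\<close>
definition bpmf :: "nat \<Rightarrow> real" where
  "bpmf n = (if n \<ge> 1 then (sqrt (1 + 1 / real n) - 1) / sqrt (real n + 1) else 0)"

definition b2pmf :: "nat \<Rightarrow> real" where
  "b2pmf n = bpmf (n div 2) / 2"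

end

theory Submission
  imports Defs "HOL-Real_Asymp.Real_Asymp"
begin

text \<open>Since \<open>\<nu>(n + 2) / \<nu>(n) = (n\<^sup>2 + p\<^sup>2) / ((n + 1)(n + 2))\<close> tends to 1 while
  \<open>e\<^sup>\<theta> < 1\<close>, the weights \<open>f(n)\<close> decay geometrically, so \<open>(n + 2)\<^sup>2 f(n)\<close> is bounded. The law \<open>b\<^sub>2\<close>
  has only a polynomial tail, \<open>b\<^sub>2(n) \<ge> 1 / (6 (n + 2)\<^sup>2)\<close>, hence dominates \<open>f\<close>; conditioning on
  \<open>N \<ge> 2\<close> merely divides by a constant.\<close>

lemma bounded_if_eventually_decreasing_by_2:
  fixes g :: "nat \<Rightarrow> 'a :: linorder"
  assumes "eventually (\<lambda>n. g (n + 2) \<le> g n) sequentially"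
  shows "\<exists>M. \<forall>n. g n \<le> M"
proof -
  obtain N where N: "\<And>n. N \<le> n \<Longrightarrow> g (n + 2) \<le> g n"
    using assms by (auto simp: eventually_at_top_linorder)
  define M where "M = Max (g ` {..N + 1})"
  have "g n \<le> M" for n
  proof (induction n rule: less_induct)
    case (less n)
    show ?case
    proof (cases "n \<le> N + 1")
      case True
      then show ?thesis
        unfolding M_def by (intro Max_ge) auto
    next
      case False
      then obtain k where k: "n = k + 2" "N \<le> k"
        by (intro that[of "n - 2"]) auto
      then show ?thesis
        using N[of k] less[of k] by auto
    qed
  qed
  then show ?thesis
    by blast
qed

lemma arcsine_nu_add_2:
  "arcsine_nu p (n + 2) = arcsine_nu p n * ((real n)^2 + p^2) / ((real n + 1) * (real n + 2))"
proof -
  have fact: "fact (n + 2) = (real n + 1) * (real n + 2) * (fact n :: real)"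
    by (simp add: fact_Suc numeral_2_eq_2 algebra_simps)
  have half: "(n + 2) div 2 = Suc (n div 2)"
    by simp
  show ?thesis
  proof (cases "even n")
    case True
    then have "2 * real (n div 2) = real n"
      by (elim evenE) simp
    with True show ?thesis
      unfolding arcsine_nu_def half prod.lessThan_Suc fact by (simp add: field_simps)
  next
    case False
    then have "2 * real (n div 2) + 1 = real n"
      by (elim oddE) simp
    with False show ?thesis
      unfolding arcsine_nu_def half prod.lessThan_Suc fact by (simp add: field_simps)
  qed
qed

lemma arcsine_nu_nonneg: "0 \<le> p \<Longrightarrow> 0 \<le> arcsine_nu p n"
  unfolding arcsine_nu_def by (auto intro!: prod_nonneg divide_nonneg_nonneg mult_nonneg_nonneg)

lemma arcsine_nu_geometric_weighted_bounded:
  fixes p q :: real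
  assumes "0 \<le> p" "0 \<le> q" "q < 1"
  shows "\<exists>M. \<forall>n. arcsine_nu p n * q^n * (real n + 2)^2 \<le> M"
proof -
  define g where "g n = arcsine_nu p n * q^n * (real n + 2)^2" for n
  define r where "r n = q^2 * (((real n)^2 + p^2) * (real n + 4)^2) / ((real n + 1) * (real n + 2)^3)" for n
  have g_add_2: "g (n + 2) = g n * r n" for n
  proof -
    let ?a = "arcsine_nu p n * q^n" and ?x = "q^2 * (((real n)^2 + p^2) * (real n + 4)^2)"
    have "g (n + 2) = ?a * ?x / ((real n + 1) * (real n + 2))"
      unfolding g_def arcsine_nu_add_2 by (simp add: power_add power2_eq_square algebra_simps)
    also have "\<dots> = ?a * (real n + 2)^2 * ?x / ((real n + 1) * (real n + 2)^3)"
      by (simp add: power2_eq_square power3_eq_cube)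
    finally show ?thesis
      unfolding g_def r_def by simp
  qed
  have "(r \<longlongrightarrow> q^2) sequentially"
    unfolding r_def by real_asymp
  moreover have "q^2 < 1"
    using assms by (simp add: power_less_one_iff)
  ultimately have "eventually (\<lambda>n. r n < 1) sequentially"
    by (rule order_tendstoD)
  then have "eventually (\<lambda>n. g (n + 2) \<le> g n) sequentially"
  proof eventually_elim
    case (elim n)
    have "0 \<le> g n"
      using assms by (simp add: g_def arcsine_nu_nonneg)
    with elim show ?case
      unfolding g_add_2 by (simp add: mult_left_le)
  qed
  then show ?thesis
    unfolding g_def by (rule bounded_if_eventually_decreasing_by_2)
qed

lemma arcsine_theta_neg: "p \<noteq> 0 \<Longrightarrow> m \<noteq> 0 \<Longrightarrow> arcsine_theta p m < 0"
  unfolding arcsine_theta_def by (simp add: ln_gt_zero)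

lemma arcsine_pmf_eq:
  "arcsine_pmf p m n = arcsine_nu p n * exp (arcsine_theta p m) ^ n * exp (- arcsine_kappa p m)"
  unfolding arcsine_pmf_def by (simp add: exp_diff exp_of_nat_mult exp_minus field_simps)

lemma bpmf_lower_bound:
  assumes "1 \<le> k"
  shows "1 / (3 * real k * (real k + 1)) \<le> bpmf k"
proof -
  have "1 + 1 / (3 * real k) \<le> sqrt (1 + 1 / real k)"
    using assms by (intro real_le_rsqrt) (simp add: field_simps power2_eq_square)
  moreover have "sqrt (real k + 1) \<le> real k + 1"
    using assms by (intro real_le_lsqrt) (simp_all add: power2_eq_square)
  ultimately have "(1 / (3 * real k)) / (real k + 1) \<le> (sqrt (1 + 1 / real k) - 1) / sqrt (real k + 1)"
    using assms by (intro frac_le) auto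
  with assms show ?thesis
    by (simp add: bpmf_def)
qed

lemma b2pmf_lower_bound:
  assumes "2 \<le> n"
  shows "1 / (6 * (real n + 2)^2) \<le> b2pmf n"
proof -
  define k where "k = n div 2"
  have "1 \<le> k" "real k \<le> real n"
    using assms by (auto simp: k_def)
  then have "6 * real k * (real k + 1) \<le> 6 * (real n + 2)^2"
    by (simp add: power2_eq_square mult_mono)
  then have "1 / (6 * (real n + 2)^2) \<le> 1 / (6 * real k * (real k + 1))"
    using \<open>1 \<le> k\<close> by (intro frac_le) auto
  also have "\<dots> = 1 / (3 * real k * (real k + 1)) / 2"
    by simp
  also have "\<dots> \<le> b2pmf n"
    using bpmf_lower_bound[OF \<open>1 \<le> k\<close>] by (simp add: b2pmf_def k_def)
  finally show ?thesis .
qed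

lemma arcsine_pmf_le_b2pmf:
  assumes "0 < p" "m \<noteq> 0"
  shows "\<exists>C. \<forall>n \<ge> 2. arcsine_pmf p m n \<le> C * b2pmf n"
proof -
  define q where "q = exp (arcsine_theta p m)"
  define K where "K = exp (- arcsine_kappa p m)"
  have "q < 1"
    using arcsine_theta_neg assms by (simp add: q_def)
  then obtain M where M: "\<And>n. arcsine_nu p n * q^n * (real n + 2)^2 \<le> M"
    using arcsine_nu_geometric_weighted_bounded[of p q] assms by (auto simp: q_def)
  have "0 \<le> M"
    using M[of 0] arcsine_nu_nonneg[of p 0] assms by simp
  have "arcsine_pmf p m n \<le> (6 * M * K) * b2pmf n" if "2 \<le> n" for n
  proof -
    have "arcsine_pmf p m n = arcsine_nu p n * q^n * (real n + 2)^2 * K / (real n + 2)^2"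
      by (simp add: arcsine_pmf_eq q_def K_def)
    also have "\<dots> \<le> M * K / (real n + 2)^2"
      using M[of n] by (intro divide_right_mono mult_right_mono) (auto simp: K_def)
    also have "\<dots> = (6 * M * K) * (1 / (6 * (real n + 2)^2))"
      by simp
    also have "\<dots> \<le> (6 * M * K) * b2pmf n"
      using b2pmf_lower_bound[OF that] \<open>0 \<le> M\<close> by (intro mult_left_mono) (auto simp: K_def)
    finally show ?thesis .
  qed
  then show ?thesis
    by blast
qed

theorem mainTheorem4:
  fixes p m :: real
  assumes "p > 0" and "m > 0"
  shows "\<exists>C. \<forall>n::nat. n \<ge> 2 \<longrightarrow> arcsine_cond_pmf p m n \<le> C * b2pmf n"
proof -
  obtain C where C: "\<And>n. 2 \<le> n \<Longrightarrow> arcsine_pmf p m n \<le> C * b2pmf n"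
    using arcsine_pmf_le_b2pmf assms by fastforce
  define S where "S = (\<Sum>\<^sub>\<infinity>k\<in>{2..}. arcsine_pmf p m k)"
  have "0 \<le> S"
    unfolding S_def using assms by (intro infsum_nonneg) (simp add: arcsine_pmf_def arcsine_nu_nonneg)
  \<comment> \<open>Also covers \<open>S = 0\<close> (e.g. a non-summable family), where both sides are \<open>0\<close> since \<open>x / 0 = 0\<close>.\<close>
  then have "arcsine_cond_pmf p m n \<le> C / S * b2pmf n" if "2 \<le> n" for n
    unfolding arcsine_cond_pmf_def S_def[symmetric] using C[OF that] by (simp add: divide_right_mono)
  then show ?thesis
    by blast
qed

end
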